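(* Let $f:\mathbb{R}^n\to\mathbb{R}$ be $L$-smooth (differentiable with $L$-Lipschitz gradient) and $\mu$-strongly convex with $0<\mu\le L$, let $\mathcal{X}\subset\mathbb{R}^n$ be a nonempty closed convex set, and let $x^\star$ be the unique minimizer of $f$ over $\mathcal{X}$. Let $x^t\in\mathbb{R}^n$ be a (possibly random) point and $g^t$ a random vector in $\mathbb{R}^n$ such that, with $\mathbb{E}_t[\cdot]=\mathbb{E}[\cdot\mid x^t]$, $$\|\mathbb{E}_t[g^t]-\nabla f(x^t)\|\le C_t,\qquad \mathbb{E}_t\|g^t-\mathbb{E}_t[g^t]\|^2\le D_t$$ for some $C_t,D_t\ge0$. Let $x^{t+1}=P_{\mathcal{X}}(x^t-\eta g^t)$ with $\eta=\frac{1}{2(\mu+L)}$, where $P_{\mathcal{X}}$ is the Euclidean projection onto $\mathcal{X}$. Then $$\mathbb{E}_t\|x^{t+1}-x^\star\|^2\le\Big(1-\frac{\mu}{2(\mu+L)}\Big)\|x^t-x^\star\|^2+\Big(\frac{1}{2(\mu+L)^2}+\frac{1}{2\mu L}\Big)C_t^2+\frac{1}{4(\mu+L)^2}D_t.$$ *)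

theory Defs
  imports "HOL-Analysis.Analysis" "HOL-Probability.Probability"
begin

definition strongly_convex_on :: "'a::real_normed_vector set \<Rightarrow> real \<Rightarrow> ('a \<Rightarrow> real) \<Rightarrow> bool" where
  "strongly_convex_on S mu f \<longleftrightarrow> convex S \<and>
     (\<forall>x\<in>S. \<forall>y\<in>S. \<forall>t::real. 0 \<le> t \<and> t \<le> 1 \<longrightarrow>
        f (t *\<^sub>R x + (1 - t) *\<^sub>R y) \<le> t * f x + (1 - t) * f y - mu / 2 * t * (1 - t) * (norm (x - y))\<^sup>2)"

definition L_smooth :: "real \<Rightarrow> ('a::real_inner \<Rightarrow> real) \<Rightarrow> ('a \<Rightarrow> 'a) \<Rightarrow> bool" where
  "L_smooth L f grad \<longleftrightarrow>
     (\<forall>x. (f has_derivative (\<lambda>h. grad x \<bullet> h)) (at x)) \<and>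
     (\<forall>x y. norm (grad x - grad y) \<le> L * norm (x - y))"

end

theory Submission
  imports Defs
begin

(* Since xs minimizes f over X, it is a fixed point of the projected gradient step
   z |-> P_X (z - eta grad z), and P_X is nonexpansive. Hence the new squared distance is at most
   the squared distance between the unprojected steps from x (with g) and from xs (with grad xs),
   whose expectation splits into the same quantity for the mean E g plus eta^2 times the variance
   of g. The mean step is an exact gradient step, which contracts because the gradient of a
   mu-strongly convex L-smooth function is cocoercive,
     mu L |y - x|^2 + |grad y - grad x|^2 <= (mu + L) <grad y - grad x, y - x>,
   perturbed by the bias eta (E g - grad x); Young's inequality separates the two. *)

lemma has_real_derivative_along_line:
  fixes f :: "'a::real_inner \<Rightarrow> real"
  assumes "\<And>z. (f has_derivative (\<lambda>h. grad z \<bullet> h)) (at z)"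
  shows "((\<lambda>t. f (x + t *\<^sub>R v)) has_real_derivative (grad (x + t *\<^sub>R v) \<bullet> v)) (at t)"
proof -
  have "((\<lambda>t. x + t *\<^sub>R v) has_derivative (\<lambda>h. h *\<^sub>R v)) (at t)"
    by (auto intro!: derivative_eq_intros)
  from has_derivative_compose[OF this assms] show ?thesis
    by (simp add: has_field_derivative_def o_def mult_commute_abs)
qed

lemma has_real_derivative_nonneg_at_left_min:
  fixes \<psi> :: "real \<Rightarrow> real"
  assumes "(\<psi> has_real_derivative d) (at 0)" and "\<And>h. 0 < h \<Longrightarrow> h \<le> 1 \<Longrightarrow> \<psi> 0 \<le> \<psi> h"
  shows "0 \<le> d"
proof (rule ccontr)
  assume "\<not> 0 \<le> d"
  then obtain e where "e > 0" and "\<And>h. 0 < h \<Longrightarrow> h < e \<Longrightarrow> \<psi> h < \<psi> 0"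
    using DERIV_neg_dec_right[OF assms(1)] by force
  then have "\<psi> (min (e / 2) 1) < \<psi> 0" by simp
  with assms(2)[of "min (e / 2) 1"] \<open>e > 0\<close> show False by simp
qed

lemma L_smooth_quadratic_upper_bound:
  fixes f :: "'a::real_inner \<Rightarrow> real"
  assumes "L_smooth L f grad"
  shows "f y \<le> f x + grad x \<bullet> (y - x) + L / 2 * (norm (y - x))\<^sup>2"
proof -
  define v where "v = y - x"
  define \<psi> where "\<psi> t = f (x + t *\<^sub>R v) - t * (grad x \<bullet> v) - L / 2 * t\<^sup>2 * (norm v)\<^sup>2" for t
  have diff: "\<And>z. (f has_derivative (\<lambda>h. grad z \<bullet> h)) (at z)"
    and lip: "\<And>z w. norm (grad z - grad w) \<le> L * norm (z - w)"
    using assms unfolding L_smooth_def by auto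
  have deriv: "(\<psi> has_real_derivative (grad (x + t *\<^sub>R v) - grad x) \<bullet> v - L * t * (norm v)\<^sup>2) (at t)" for t
    unfolding \<psi>_def inner_diff_left
    by (rule derivative_eq_intros has_real_derivative_along_line[OF diff] | simp)+
  have nonpos: "(grad (x + t *\<^sub>R v) - grad x) \<bullet> v - L * t * (norm v)\<^sup>2 \<le> 0" if "0 \<le> t" for t
  proof -
    have "(grad (x + t *\<^sub>R v) - grad x) \<bullet> v \<le> norm (grad (x + t *\<^sub>R v) - grad x) * norm v"
      by (rule norm_cauchy_schwarz)
    also have "\<dots> \<le> L * norm (t *\<^sub>R v) * norm v"
      using lip[of "x + t *\<^sub>R v" x] by (intro mult_right_mono) auto
    also have "\<dots> = L * t * (norm v)\<^sup>2"
      using that by (simp add: power2_eq_square)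
    finally show ?thesis by simp
  qed
  have "\<psi> 1 \<le> \<psi> 0"
  proof (rule DERIV_nonpos_imp_nonincreasing[of 0 1])
    fix t :: real assume "0 \<le> t" "t \<le> 1"
    then show "\<exists>d. (\<psi> has_real_derivative d) (at t) \<and> d \<le> 0"
      using deriv nonpos by blast
  qed simp
  then show ?thesis
    unfolding \<psi>_def v_def by simp
qed

lemma strongly_convex_on_UNIV_first_order:
  fixes f :: "'a::real_inner \<Rightarrow> real"
  assumes "strongly_convex_on UNIV mu f" and "\<And>z. (f has_derivative (\<lambda>h. grad z \<bullet> h)) (at z)"
  shows "f x + grad x \<bullet> (y - x) + mu / 2 * (norm (y - x))\<^sup>2 \<le> f y"
proof -
  define v where "v = y - x"
  define c where "c = mu / 2 * (norm v)\<^sup>2"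
  define \<psi> where "\<psi> t = (1 - t) * f x + t * f y - c * t * (1 - t) - f (x + t *\<^sub>R v)" for t
  have "(\<psi> has_real_derivative f y - f x - c - grad x \<bullet> v) (at 0)"
    unfolding \<psi>_def
    by (rule derivative_eq_intros has_real_derivative_along_line[OF assms(2)] | simp)+
  moreover have "\<psi> 0 \<le> \<psi> h" if "0 < h" "h \<le> 1" for h
  proof -
    have "x + h *\<^sub>R v = h *\<^sub>R y + (1 - h) *\<^sub>R x"
      by (simp add: v_def algebra_simps)
    then show ?thesis
      using assms(1) that unfolding strongly_convex_on_def \<psi>_def c_def v_def
      by (auto simp: algebra_simps)
  qed
  ultimately have "0 \<le> f y - f x - c - grad x \<bullet> v"
    by (rule has_real_derivative_nonneg_at_left_min)
  then show ?thesis
    unfolding c_def v_def by simp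
qed

lemma strongly_convex_gradient_strongly_monotone:
  fixes f :: "'a::real_inner \<Rightarrow> real"
  assumes "strongly_convex_on UNIV mu f" and "\<And>z. (f has_derivative (\<lambda>h. grad z \<bullet> h)) (at z)"
  shows "mu * (norm (y - x))\<^sup>2 \<le> (grad y - grad x) \<bullet> (y - x)"
  using strongly_convex_on_UNIV_first_order[OF assms, of x y]
    strongly_convex_on_UNIV_first_order[OF assms, of y x]
  by (simp add: norm_minus_commute inner_diff_left inner_diff_right)

lemma strongly_convex_gradient_norm_lower_bound:
  fixes f :: "'a::real_inner \<Rightarrow> real"
  assumes "0 \<le> mu" and "strongly_convex_on UNIV mu f"
    and "\<And>z. (f has_derivative (\<lambda>h. grad z \<bullet> h)) (at z)"
  shows "mu * norm (y - x) \<le> norm (grad y - grad x)"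
proof (cases "x = y")
  case False
  have "mu * norm (y - x) * norm (y - x) \<le> norm (grad y - grad x) * norm (y - x)"
    using strongly_convex_gradient_strongly_monotone[OF assms(2,3), where x=x and y=y]
      norm_cauchy_schwarz[of "grad y - grad x" "y - x"]
    by (simp add: power2_eq_square)
  with False show ?thesis by simp
qed (simp add: assms(1))

lemma minimizer_first_order_condition:
  fixes f :: "'a::real_inner \<Rightarrow> real"
  assumes "\<And>z. (f has_derivative (\<lambda>h. grad z \<bullet> h)) (at z)"
    and "convex S" and "y \<in> S" and "\<And>z. z \<in> S \<Longrightarrow> f y \<le> f z" and "z \<in> S"
  shows "0 \<le> grad y \<bullet> (z - y)"
proof -
  have "((\<lambda>t. f (y + t *\<^sub>R (z - y))) has_real_derivative grad y \<bullet> (z - y)) (at 0)"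
    using has_real_derivative_along_line[OF assms(1), where x=y and t=0 and v="z - y"] by simp
  moreover have "f (y + 0 *\<^sub>R (z - y)) \<le> f (y + h *\<^sub>R (z - y))" if "0 < h" "h \<le> 1" for h
  proof -
    have "(1 - h) *\<^sub>R y + h *\<^sub>R z \<in> S"
      using assms(2,3,5) that by (intro convexD) auto
    then show ?thesis
      using assms(4) by (simp add: algebra_simps)
  qed
  ultimately show ?thesis
    by (rule has_real_derivative_nonneg_at_left_min)
qed

lemma closest_point_step_eq_self:
  fixes S :: "'a::{real_inner,heine_borel} set"
  assumes "convex S" and "closed S" and "y \<in> S"
    and "\<And>z. z \<in> S \<Longrightarrow> 0 \<le> v \<bullet> (z - y)" and "0 \<le> \<eta>"
  shows "closest_point S (y - \<eta> *\<^sub>R v) = y"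
proof (rule closest_point_unique[OF assms(1-3), symmetric], intro ballI)
  fix z assume "z \<in> S"
  have "0 \<le> \<eta> * (v \<bullet> (z - y))"
    using assms(4)[OF \<open>z \<in> S\<close>] assms(5) by simp
  then have "(y - \<eta> *\<^sub>R v - y) \<bullet> (y - \<eta> *\<^sub>R v - y) \<le> (y - \<eta> *\<^sub>R v - z) \<bullet> (y - \<eta> *\<^sub>R v - z)"
    using inner_ge_zero[of "y - z"] by (simp add: inner_commute algebra_simps)
  then show "dist (y - \<eta> *\<^sub>R v) y \<le> dist (y - \<eta> *\<^sub>R v) z"
    by (simp only: dist_norm norm_le)
qed

lemma power2_norm_diff:
  fixes p q :: "'a::real_inner"
  shows "(norm (p - q))\<^sup>2 = (norm p)\<^sup>2 - 2 * (p \<bullet> q) + (norm q)\<^sup>2"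
  unfolding power2_norm_eq_inner by (simp add: inner_diff inner_commute)

lemma power2_norm_diff_scaleR:
  fixes p q :: "'a::real_inner"
  shows "(norm (p - c *\<^sub>R q))\<^sup>2 = (norm p)\<^sup>2 - 2 * c * (p \<bullet> q) + c\<^sup>2 * (norm q)\<^sup>2"
  unfolding power2_norm_diff by (simp add: power_mult_distrib)

lemma power2_norm_diff_le:
  fixes u v :: "'a::real_inner"
  assumes "0 < a"
  shows "(norm (u - v))\<^sup>2 \<le> (1 + a) * (norm u)\<^sup>2 + (1 + 1 / a) * (norm v)\<^sup>2"
proof -
  have "0 \<le> (norm (v - (- a) *\<^sub>R u))\<^sup>2 / a"
    using assms by simp
  also have "\<dots> = (norm v)\<^sup>2 / a + 2 * (u \<bullet> v) + a * (norm u)\<^sup>2"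
    using assms unfolding power2_norm_diff_scaleR
    by (simp add: inner_commute power2_eq_square field_simps)
  finally show ?thesis
    unfolding power2_norm_diff by (simp add: algebra_simps)
qed

lemma convex_smooth_bregman_lower_bound:
  fixes \<phi> :: "'a::real_inner \<Rightarrow> real"
  assumes lower: "\<And>a b. \<phi> a + gp a \<bullet> (b - a) \<le> \<phi> b"
    and upper: "\<And>a b. \<phi> b \<le> \<phi> a + gp a \<bullet> (b - a) + L / 2 * (norm (b - a))\<^sup>2"
  shows "(t - L / 2 * t\<^sup>2) * (norm (gp y - gp x))\<^sup>2 \<le> \<phi> y - \<phi> x - gp x \<bullet> (y - x)"
proof -
  define w where "w = gp y - gp x"
  define z where "z = y - t *\<^sub>R w"
  have "\<phi> x + gp x \<bullet> (z - x) \<le> \<phi> y + gp y \<bullet> (z - y) + L / 2 * (norm (z - y))\<^sup>2"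
    using lower[where a=x and b=z] upper[where a=y and b=z] by linarith
  moreover have "gp x \<bullet> (z - x) = gp x \<bullet> (y - x) - t * (gp x \<bullet> w)"
    and "gp y \<bullet> (z - y) = - (t * (gp y \<bullet> w))"
    and "L / 2 * (norm (z - y))\<^sup>2 = L / 2 * (t\<^sup>2 * (norm w)\<^sup>2)"
    by (simp_all add: z_def inner_diff_right power_mult_distrib)
  moreover have "t * (gp y \<bullet> w) - t * (gp x \<bullet> w) = t * (norm w)\<^sup>2"
    by (simp add: w_def power2_norm_eq_inner inner_diff_left right_diff_distrib)
  moreover have "(t - L / 2 * t\<^sup>2) * (norm w)\<^sup>2 = t * (norm w)\<^sup>2 - L / 2 * (t\<^sup>2 * (norm w)\<^sup>2)"
    by (simp add: left_diff_distrib)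
  ultimately show ?thesis
    unfolding w_def by linarith
qed

(* Baillon-Haddad. Adding the Bregman bound for (x, y) and (y, x) gives a bound for every t;
   t = 1/L yields the claim, and for L <= 0 letting t grow forces gp y = gp x. *)
lemma convex_smooth_gradient_cocoercive:
  fixes \<phi> :: "'a::real_inner \<Rightarrow> real"
  assumes lower: "\<And>a b. \<phi> a + gp a \<bullet> (b - a) \<le> \<phi> b"
    and upper: "\<And>a b. \<phi> b \<le> \<phi> a + gp a \<bullet> (b - a) + L / 2 * (norm (b - a))\<^sup>2"
  shows "(norm (gp y - gp x))\<^sup>2 \<le> L * ((gp y - gp x) \<bullet> (y - x))"
proof -
  define K where "K = (norm (gp y - gp x))\<^sup>2"
  define P where "P = (gp y - gp x) \<bullet> (y - x)"
  have bound: "(2 * t - L * t\<^sup>2) * K \<le> P" for t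
  proof -
    have "(t - L / 2 * t\<^sup>2) * K \<le> \<phi> y - \<phi> x - gp x \<bullet> (y - x)"
      using convex_smooth_bregman_lower_bound[OF lower upper, where t=t and x=x and y=y] unfolding K_def .
    moreover have "(t - L / 2 * t\<^sup>2) * K \<le> \<phi> x - \<phi> y - gp y \<bullet> (x - y)"
      using convex_smooth_bregman_lower_bound[OF lower upper, where t=t and x=y and y=x]
      unfolding K_def by (simp only: norm_minus_commute)
    moreover have "P = (\<phi> y - \<phi> x - gp x \<bullet> (y - x)) + (\<phi> x - \<phi> y - gp y \<bullet> (x - y))"
      unfolding P_def by (simp add: inner_diff_left inner_diff_right)
    moreover have "(2 * t - L * t\<^sup>2) * K = 2 * ((t - L / 2 * t\<^sup>2) * K)"
      by (simp add: algebra_simps)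
    ultimately show ?thesis by linarith
  qed
  show ?thesis
  proof (cases "L > 0")
    case True
    have "(2 * (1 / L) - L * (1 / L)\<^sup>2) * K = K / L"
      using True by (simp add: power2_eq_square field_simps)
    then have "K / L \<le> P"
      using bound[of "1 / L"] by simp
    then show ?thesis
      using True by (simp add: K_def P_def pos_divide_le_eq mult.commute)
  next
    case False
    have "K = 0"
    proof (rule ccontr)
      assume "K \<noteq> 0"
      then have "K > 0" by (simp add: K_def)
      define t where "t = (\<bar>P\<bar> + 1) / K"
      have "2 * t * K \<le> (2 * t - L * t\<^sup>2) * K"
        using False \<open>K > 0\<close> by (intro mult_right_mono) (auto simp: t_def mult_nonpos_nonneg)
      also have "\<dots> \<le> P" by (rule bound)
      finally show False
        using \<open>K > 0\<close> by (simp add: t_def)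
    qed
    then show ?thesis by (simp add: K_def)
  qed
qed

lemma strongly_convex_smooth_gradient_cocoercive:
  fixes f :: "'a::real_inner \<Rightarrow> real"
  assumes "L_smooth L f grad" and "strongly_convex_on UNIV mu f"
  shows "mu * L * (norm (y - x))\<^sup>2 + (norm (grad y - grad x))\<^sup>2 \<le> (mu + L) * ((grad y - grad x) \<bullet> (y - x))"
proof -
  have diff: "\<And>z. (f has_derivative (\<lambda>h. grad z \<bullet> h)) (at z)"
    using assms(1) unfolding L_smooth_def by auto
  define \<phi> where "\<phi> z = f z - mu / 2 * (norm z)\<^sup>2" for z
  define gp where "gp z = grad z - mu *\<^sub>R z" for z
  have shift: "\<phi> b - \<phi> a - gp a \<bullet> (b - a) = f b - f a - grad a \<bullet> (b - a) - mu / 2 * (norm (b - a))\<^sup>2" for a b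
  proof -
    have "mu / 2 * (norm b)\<^sup>2 = mu / 2 * (norm a)\<^sup>2 + mu * (a \<bullet> (b - a)) + mu / 2 * (norm (b - a))\<^sup>2"
      by (simp add: power2_norm_eq_inner inner_commute algebra_simps)
    moreover have "gp a \<bullet> (b - a) = grad a \<bullet> (b - a) - mu * (a \<bullet> (b - a))"
      by (simp add: gp_def inner_diff_left)
    ultimately show ?thesis
      unfolding \<phi>_def by linarith
  qed
  have "(norm (gp y - gp x))\<^sup>2 \<le> (L - mu) * ((gp y - gp x) \<bullet> (y - x))"
  proof (rule convex_smooth_gradient_cocoercive)
    show "\<phi> a + gp a \<bullet> (b - a) \<le> \<phi> b" for a b
      using strongly_convex_on_UNIV_first_order[OF assms(2) diff, of a b] shift[of b a] by linarith
    show "\<phi> b \<le> \<phi> a + gp a \<bullet> (b - a) + (L - mu) / 2 * (norm (b - a))\<^sup>2" for a b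
      using L_smooth_quadratic_upper_bound[OF assms(1), of b a] shift[of b a]
      by (simp add: left_diff_distrib diff_divide_distrib)
  qed
  moreover have "gp y - gp x = (grad y - grad x) - mu *\<^sub>R (y - x)"
    by (simp add: gp_def algebra_simps)
  ultimately show ?thesis
    by (simp add: power2_norm_eq_inner inner_commute algebra_simps)
qed

lemma gradient_step_contraction:
  fixes f :: "'a::real_inner \<Rightarrow> real"
  assumes "0 < mu" and "mu \<le> L" and "L_smooth L f grad" and "strongly_convex_on UNIV mu f"
  shows "(norm (x - y - (1 / (2 * (mu + L))) *\<^sub>R (grad x - grad y)))\<^sup>2
    \<le> (1 - mu / (2 * (mu + L)) - mu * L / (2 * (mu + L)\<^sup>2)) * (norm (x - y))\<^sup>2"
proof -
  define s where "s = mu + L"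
  define N where "N = (norm (x - y))\<^sup>2"
  define K where "K = (norm (grad x - grad y))\<^sup>2"
  define P where "P = (grad x - grad y) \<bullet> (x - y)"
  have "s > 0" and "L = s - mu"
    using assms(1,2) by (simp_all add: s_def)
  have diff: "\<And>z. (f has_derivative (\<lambda>h. grad z \<bullet> h)) (at z)"
    using assms(3) unfolding L_smooth_def by auto
  have cocoercive: "mu * L * N + K \<le> s * P"
    unfolding s_def N_def K_def P_def by (rule strongly_convex_smooth_gradient_cocoercive[OF assms(3,4)])
  have "mu\<^sup>2 * N \<le> K"
    using strongly_convex_gradient_norm_lower_bound[OF _ assms(4) diff, where x=y and y=x] assms(1)
    unfolding N_def K_def by (simp add: power_mono flip: power_mult_distrib)
  have "(mu * L * N + K) / s\<^sup>2 \<le> P / s"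
  proof -
    have "(mu * L * N + K) / s\<^sup>2 \<le> s * P / s\<^sup>2"
      using cocoercive by (simp add: divide_right_mono)
    also have "\<dots> = P / s"
      using \<open>s > 0\<close> by (simp add: power2_eq_square)
    finally show ?thesis .
  qed
  have "(norm (x - y - (1 / (2 * s)) *\<^sub>R (grad x - grad y)))\<^sup>2 = N - P / s + K / (4 * s\<^sup>2)"
    unfolding power2_norm_diff_scaleR N_def K_def P_def
    by (simp add: inner_commute power2_eq_square)
  also have "\<dots> \<le> N - (mu * L * N + K) / s\<^sup>2 + K / (4 * s\<^sup>2)"
    using \<open>(mu * L * N + K) / s\<^sup>2 \<le> P / s\<close> by linarith
  also have "\<dots> = N - (mu * L * N + 3 / 4 * K) / s\<^sup>2"
    using \<open>s > 0\<close> by (simp add: field_simps)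
  also have "\<dots> \<le> N - (mu * L * N + 3 / 4 * (mu\<^sup>2 * N)) / s\<^sup>2"
    using \<open>mu\<^sup>2 * N \<le> K\<close> by (intro diff_left_mono divide_right_mono) (auto simp: mult.commute)
  also have "\<dots> = (1 - mu / (2 * s) - mu * L / (2 * s\<^sup>2)) * N - mu\<^sup>2 * N / (4 * s\<^sup>2)"
    using \<open>s > 0\<close> unfolding \<open>L = s - mu\<close> by (simp add: field_simps power2_eq_square)
  also have "\<dots> \<le> (1 - mu / (2 * s) - mu * L / (2 * s\<^sup>2)) * N"
    by (simp add: N_def)
  finally show ?thesis
    unfolding s_def N_def .
qed

lemma Young_weight_for_biased_gradient_step:
  fixes mu L :: real
  assumes "0 < mu" and "0 < L"
  obtains a where "0 < a"
    and "(1 + a) * (1 - mu / (2 * (mu + L)) - mu * L / (2 * (mu + L)\<^sup>2)) \<le> 1 - mu / (2 * (mu + L))"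
    and "(1 + 1 / a) * (1 / (2 * (mu + L)))\<^sup>2 = 1 / (2 * (mu + L)\<^sup>2) + 1 / (2 * mu * L)"
proof -
  define s where "s = mu + L"
  define r where "r = mu / (2 * s)"
  define a' where "a' = mu * L / (2 * s\<^sup>2)"
  \<comment> \<open>chosen so that the last equation holds; \<open>a \<le> a'\<close> then uses up the slack \<open>a'\<close>\<close>
  define a where "a = mu * L / (mu * L + 2 * s\<^sup>2)"
  have "s > 0" using assms by (simp add: s_def)
  have "0 < a" using assms by (simp add: a_def add_pos_nonneg)
  have "a \<le> a'"
    unfolding a_def a'_def using \<open>s > 0\<close> assms by (intro divide_left_mono) (auto simp: add_pos_pos)
  have "0 \<le> a * (r + a')"
    using \<open>0 < a\<close> \<open>s > 0\<close> assms by (simp add: r_def a'_def)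
  then have "(1 + a) * (1 - r - a') \<le> 1 - r"
    using \<open>a \<le> a'\<close> by (simp add: algebra_simps)
  moreover have "(1 + 1 / a) * (1 / (2 * s))\<^sup>2 = 1 / (2 * s\<^sup>2) + 1 / (2 * mu * L)"
  proof -
    have inverse_a: "1 / a = 1 + 2 * s\<^sup>2 / (mu * L)"
      using assms by (simp add: a_def field_simps)
    show ?thesis
      unfolding inverse_a using \<open>s > 0\<close> assms by (simp add: power2_eq_square field_simps)
  qed
  ultimately show ?thesis
    using that[OF \<open>0 < a\<close>] unfolding s_def r_def a'_def by blast
qed

lemma biased_gradient_step_bound:
  fixes f :: "'a::real_inner \<Rightarrow> real"
  assumes "0 < mu" and "mu \<le> L" and "L_smooth L f grad" and "strongly_convex_on UNIV mu f"
    and "norm (m - grad x) \<le> C"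
  shows "(norm (x - (1 / (2 * (mu + L))) *\<^sub>R m - (y - (1 / (2 * (mu + L))) *\<^sub>R grad y)))\<^sup>2
    \<le> (1 - mu / (2 * (mu + L))) * (norm (x - y))\<^sup>2 + (1 / (2 * (mu + L)\<^sup>2) + 1 / (2 * mu * L)) * C\<^sup>2"
proof -
  define \<eta> where "\<eta> = 1 / (2 * (mu + L))"
  define u where "u = x - y - \<eta> *\<^sub>R (grad x - grad y)"
  define b where "b = m - grad x"
  obtain a where "0 < a"
    and factor: "(1 + a) * (1 - mu / (2 * (mu + L)) - mu * L / (2 * (mu + L)\<^sup>2)) \<le> 1 - mu / (2 * (mu + L))"
    and coefficient: "(1 + 1 / a) * \<eta>\<^sup>2 = 1 / (2 * (mu + L)\<^sup>2) + 1 / (2 * mu * L)"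
    using Young_weight_for_biased_gradient_step[of mu L] assms(1,2) unfolding \<eta>_def by auto
  have contraction_part: "(1 + a) * (norm u)\<^sup>2 \<le> (1 - mu / (2 * (mu + L))) * (norm (x - y))\<^sup>2"
  proof -
    have "(1 + a) * (norm u)\<^sup>2
        \<le> (1 + a) * ((1 - mu / (2 * (mu + L)) - mu * L / (2 * (mu + L)\<^sup>2)) * (norm (x - y))\<^sup>2)"
      using gradient_step_contraction[OF assms(1-4), of x y] \<open>0 < a\<close>
      unfolding u_def \<eta>_def by (intro mult_left_mono) auto
    also have "\<dots> \<le> (1 - mu / (2 * (mu + L))) * (norm (x - y))\<^sup>2"
      unfolding mult.assoc[symmetric] using factor by (intro mult_right_mono) auto
    finally show ?thesis .
  qed
  have bias_part: "(1 + 1 / a) * (norm (\<eta> *\<^sub>R b))\<^sup>2 \<le> (1 / (2 * (mu + L)\<^sup>2) + 1 / (2 * mu * L)) * C\<^sup>2"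
  proof -
    have "(1 + 1 / a) * (norm (\<eta> *\<^sub>R b))\<^sup>2 = (1 / (2 * (mu + L)\<^sup>2) + 1 / (2 * mu * L)) * (norm b)\<^sup>2"
      unfolding coefficient[symmetric] by (simp add: power_mult_distrib)
    also have "\<dots> \<le> (1 / (2 * (mu + L)\<^sup>2) + 1 / (2 * mu * L)) * C\<^sup>2"
      using assms(1,2,5) by (intro mult_left_mono) (auto simp: b_def power_mono)
    finally show ?thesis .
  qed
  have "x - \<eta> *\<^sub>R m - (y - \<eta> *\<^sub>R grad y) = u - \<eta> *\<^sub>R b"
    by (simp add: u_def b_def algebra_simps)
  then have "(norm (x - \<eta> *\<^sub>R m - (y - \<eta> *\<^sub>R grad y)))\<^sup>2 \<le> (1 + a) * (norm u)\<^sup>2 + (1 + 1 / a) * (norm (\<eta> *\<^sub>R b))\<^sup>2"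
    using power2_norm_diff_le[OF \<open>0 < a\<close>, of u "\<eta> *\<^sub>R b"] by (simp only:)
  then show ?thesis
    using contraction_part bias_part unfolding \<eta>_def by linarith
qed

lemma (in prob_space) integrable_power2_norm_diff:
  fixes g :: "'a \<Rightarrow> 'b::{real_inner,banach,second_countable_topology}"
  assumes "integrable M g" and "integrable M (\<lambda>\<omega>. (norm (g \<omega>))\<^sup>2)"
  shows "integrable M (\<lambda>\<omega>. (norm (c - g \<omega>))\<^sup>2)"
  using assms unfolding power2_norm_diff by simp

lemma (in prob_space) expectation_power2_norm_diff:
  fixes g :: "'a \<Rightarrow> 'b::{real_inner,banach,second_countable_topology}"
  assumes "integrable M g" and "integrable M (\<lambda>\<omega>. (norm (g \<omega>))\<^sup>2)"
  shows "(\<integral>\<omega>. (norm (c - g \<omega>))\<^sup>2 \<partial>M)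
    = (norm (c - expectation g))\<^sup>2 + (\<integral>\<omega>. (norm (g \<omega> - expectation g))\<^sup>2 \<partial>M)"
proof -
  have "(\<integral>\<omega>. (norm (c - g \<omega>))\<^sup>2 \<partial>M) = (norm c)\<^sup>2 - 2 * (c \<bullet> expectation g) + expectation (\<lambda>\<omega>. (norm (g \<omega>))\<^sup>2)"
    unfolding power2_norm_diff using assms by (simp add: prob_space)
  moreover have "(\<integral>\<omega>. (norm (g \<omega> - expectation g))\<^sup>2 \<partial>M) = expectation (\<lambda>\<omega>. (norm (g \<omega>))\<^sup>2) - (norm (expectation g))\<^sup>2"
    unfolding power2_norm_diff using assms by (simp add: prob_space power2_norm_eq_inner)
  ultimately show ?thesis
    unfolding power2_norm_diff[of c] by simp
qed

lemma (in prob_space) expectation_projected_step_power2_dist: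
  fixes g :: "'a \<Rightarrow> 'b::euclidean_space"
  assumes "convex X" and "closed X" and "X \<noteq> {}" and "closest_point X (y - \<eta> *\<^sub>R v) = y"
    and "integrable M g" and "integrable M (\<lambda>\<omega>. (norm (g \<omega>))\<^sup>2)"
  shows "(\<integral>\<omega>. (norm (closest_point X (x - \<eta> *\<^sub>R g \<omega>) - y))\<^sup>2 \<partial>M)
    \<le> (norm (x - \<eta> *\<^sub>R expectation g - (y - \<eta> *\<^sub>R v)))\<^sup>2
      + \<eta>\<^sup>2 * (\<integral>\<omega>. (norm (g \<omega> - expectation g))\<^sup>2 \<partial>M)"
proof -
  define c where "c = x - (y - \<eta> *\<^sub>R v)"
  define h where "h = (\<lambda>\<omega>. \<eta> *\<^sub>R g \<omega>)"
  have h_int: "integrable M h" and h_sq_int: "integrable M (\<lambda>\<omega>. (norm (h \<omega>))\<^sup>2)"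
    using assms(5,6) by (simp_all add: h_def power_mult_distrib)
  have nonexpansive: "(norm (closest_point X (x - \<eta> *\<^sub>R g \<omega>) - y))\<^sup>2 \<le> (norm (c - h \<omega>))\<^sup>2" for \<omega>
  proof -
    have "dist (closest_point X (x - \<eta> *\<^sub>R g \<omega>)) (closest_point X (y - \<eta> *\<^sub>R v))
        \<le> dist (x - \<eta> *\<^sub>R g \<omega>) (y - \<eta> *\<^sub>R v)"
      by (rule closest_point_lipschitz[OF assms(1-3)])
    moreover have "x - \<eta> *\<^sub>R g \<omega> - (y - \<eta> *\<^sub>R v) = c - h \<omega>"
      by (simp add: c_def h_def algebra_simps)
    ultimately show ?thesis
      using assms(4) by (simp add: dist_norm power_mono)
  qed
  have measurable: "(\<lambda>\<omega>. (norm (closest_point X (x - \<eta> *\<^sub>R g \<omega>) - y))\<^sup>2) \<in> borel_measurable M"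
  proof -
    have "continuous_on UNIV (\<lambda>z. (norm (closest_point X (x - \<eta> *\<^sub>R z) - y))\<^sup>2)"
      by (intro continuous_intros continuous_on_compose2[OF continuous_on_closest_point[OF assms(1-3)]]) auto
    then show ?thesis
      using borel_measurable_continuous_on[OF _ borel_measurable_integrable[OF assms(5)]] by blast
  qed
  have "(\<integral>\<omega>. (norm (closest_point X (x - \<eta> *\<^sub>R g \<omega>) - y))\<^sup>2 \<partial>M) \<le> (\<integral>\<omega>. (norm (c - h \<omega>))\<^sup>2 \<partial>M)"
  proof (rule integral_mono[OF _ integrable_power2_norm_diff[OF h_int h_sq_int] nonexpansive])
    show "integrable M (\<lambda>\<omega>. (norm (closest_point X (x - \<eta> *\<^sub>R g \<omega>) - y))\<^sup>2)"
      by (rule Bochner_Integration.integrable_bound[OF integrable_power2_norm_diff[OF h_int h_sq_int] measurable])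
        (use nonexpansive in auto)
  qed
  also have "\<dots> = (norm (c - expectation h))\<^sup>2 + (\<integral>\<omega>. (norm (h \<omega> - expectation h))\<^sup>2 \<partial>M)"
    by (rule expectation_power2_norm_diff[OF h_int h_sq_int])
  also have "\<dots> = (norm (x - \<eta> *\<^sub>R expectation g - (y - \<eta> *\<^sub>R v)))\<^sup>2
      + \<eta>\<^sup>2 * (\<integral>\<omega>. (norm (g \<omega> - expectation g))\<^sup>2 \<partial>M)"
    by (simp add: c_def h_def algebra_simps flip: scaleR_diff_right)
  finally show ?thesis .
qed

theorem lemmaB1:
  fixes f :: "'a::euclidean_space \<Rightarrow> real" and grad :: "'a \<Rightarrow> 'a"
    and L mu C D :: real and X :: "'a set" and xs x :: 'a
    and M :: "'b measure" and g :: "'b \<Rightarrow> 'a"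
  assumes "0 < mu" and "mu \<le> L"
    and "L_smooth L f grad"
    and "strongly_convex_on UNIV mu f"
    and "X \<noteq> {}" and "closed X" and "convex X"
    and "xs \<in> X" and "\<forall>y\<in>X. f xs \<le> f y"
    and "prob_space M"
    and "g \<in> borel_measurable M"
    and "integrable M g"
    and "integrable M (\<lambda>\<omega>. (norm (g \<omega>))\<^sup>2)"
    and "0 \<le> C" and "0 \<le> D"
    and "norm ((\<integral>\<omega>. g \<omega> \<partial>M) - grad x) \<le> C"
    and "(\<integral>\<omega>. (norm (g \<omega> - (\<integral>\<omega>'. g \<omega>' \<partial>M)))\<^sup>2 \<partial>M) \<le> D"
  shows "(\<integral>\<omega>. (norm (closest_point X (x - (1 / (2 * (mu + L))) *\<^sub>R g \<omega>) - xs))\<^sup>2 \<partial>M)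
         \<le> (1 - mu / (2 * (mu + L))) * (norm (x - xs))\<^sup>2
           + (1 / (2 * (mu + L)\<^sup>2) + 1 / (2 * mu * L)) * C\<^sup>2
           + 1 / (4 * (mu + L)\<^sup>2) * D"
proof -
  interpret prob_space M by fact
  define \<eta> where "\<eta> = 1 / (2 * (mu + L))"
  have diff: "\<And>z. (f has_derivative (\<lambda>h. grad z \<bullet> h)) (at z)"
    using assms(3) unfolding L_smooth_def by auto
  have "closest_point X (xs - \<eta> *\<^sub>R grad xs) = xs"
    using minimizer_first_order_condition[OF diff assms(7,8)] assms(1,2,9)
    by (intro closest_point_step_eq_self[OF assms(7,6,8)]) (auto simp: \<eta>_def)
  then have "(\<integral>\<omega>. (norm (closest_point X (x - \<eta> *\<^sub>R g \<omega>) - xs))\<^sup>2 \<partial>M)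
      \<le> (norm (x - \<eta> *\<^sub>R expectation g - (xs - \<eta> *\<^sub>R grad xs)))\<^sup>2
        + \<eta>\<^sup>2 * (\<integral>\<omega>. (norm (g \<omega> - expectation g))\<^sup>2 \<partial>M)"
    by (rule expectation_projected_step_power2_dist[OF assms(7,6,5) _ assms(12,13)])
  moreover have "(norm (x - \<eta> *\<^sub>R expectation g - (xs - \<eta> *\<^sub>R grad xs)))\<^sup>2
      \<le> (1 - mu / (2 * (mu + L))) * (norm (x - xs))\<^sup>2 + (1 / (2 * (mu + L)\<^sup>2) + 1 / (2 * mu * L)) * C\<^sup>2"
    unfolding \<eta>_def by (rule biased_gradient_step_bound[OF assms(1-4,16)])
  moreover have "\<eta>\<^sup>2 * (\<integral>\<omega>. (norm (g \<omega> - expectation g))\<^sup>2 \<partial>M) \<le> 1 / (4 * (mu + L)\<^sup>2) * D"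
  proof -
    have "\<eta>\<^sup>2 = 1 / (4 * (mu + L)\<^sup>2)"
      by (simp add: \<eta>_def power2_eq_square algebra_simps)
    then show ?thesis
      using mult_left_mono[OF assms(17) zero_le_power2[of \<eta>]] by simp
  qed
  ultimately show ?thesis
    unfolding \<eta>_def by linarith
qed

end
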